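(* Let $(X,d)$ be a compact metric space with a nonatomic Borel probability measure $\mu$, and let $T$ be an invertible ergodic measure-preserving transformation of $(X,\mu)$. If $T$ is uniformly rigid along a strictly increasing sequence $\{n_k\}$ of natural numbers, then $\{n_k\}$ has density zero, i.e. $\lim_{N\to\infty}\frac{1}{N}\#\{k: n_k\le N\}=0$.
   Context: $T$ is uniformly rigid along $\{n_k\}$ if $\sup_{x\in X} d(T^{n_k}x,x)\to 0$ as $k\to\infty$. *)

theory Defs
  imports "HOL-Probability.Probability"
begin

definition nonatomic :: "'a measure \<Rightarrow> bool" where
  "nonatomic M \<longleftrightarrow>
     \<not> (\<exists>A\<in>sets M. measure M A > 0 \<and>
          (\<forall>B\<in>sets M. B \<subseteq> A \<longrightarrow> measure M B = 0 \<or> measure M B = measure M A))"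

definition measure_preserving :: "'a measure \<Rightarrow> ('a \<Rightarrow> 'a) \<Rightarrow> bool" where
  "measure_preserving M T \<longleftrightarrow> T \<in> measurable M M \<and> distr M M T = M"

definition ergodic :: "'a measure \<Rightarrow> ('a \<Rightarrow> 'a) \<Rightarrow> bool" where
  "ergodic M T \<longleftrightarrow>
     (\<forall>A\<in>sets M. T -` A \<inter> space M = A \<longrightarrow> measure M A = 0 \<or> measure M A = 1)"

definition uniformly_rigid :: "'a::metric_space set \<Rightarrow> ('a \<Rightarrow> 'a) \<Rightarrow> (nat \<Rightarrow> nat) \<Rightarrow> bool" where
  "uniformly_rigid X T n \<longleftrightarrow>
     ((\<lambda>k. SUP x\<in>X. dist ((T ^^ n k) x) x) \<longlonglongrightarrow> 0)"

end

theory Submission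
  imports Defs
begin

text \<open>
  Suppose, for a contradiction, that the rigidity sequence \<open>n\<close> has positive upper
  density \<open>\<delta>\<close>.  A purely combinatorial argument shows that a set \<open>S\<close> of naturals of upper
  density at least \<open>\<delta>\<close> has a "difference cover": a finite \<open>G\<close> with \<open>card G \<le> 2/\<delta>\<close> such
  that every integer lies in \<open>G + S - S\<close> (take a maximal family of pairwise disjoint
  translates of \<open>S\<close>).  Dynamically, if \<open>S\<close> consists of \<open>\<epsilon>\<close>-rigidity times and the ball
  \<open>B(x0,\<epsilon>)\<close> has positive measure, then by ergodicity almost every point visits this
  ball in its two-sided orbit, and the difference cover moves every such point into
  \<open>B(x0,3\<epsilon>)\<close> by one of the maps \<open>T^g\<close>, \<open>g \<in> G\<close>; hence \<open>1 \<le> (2/\<delta>) \<mu>(B(x0,3\<epsilon>))\<close>.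
  Since the measure is nonatomic, balls around a point of the support have positive but
  arbitrarily small measure, which contradicts this bound.
\<close>


definition upper_density_ge :: "nat set \<Rightarrow> real \<Rightarrow> bool" where
  "upper_density_ge S \<delta> \<longleftrightarrow> (\<forall>N0. \<exists>N\<ge>N0. \<delta> * real N \<le> real (card (S \<inter> {..N})))"

text \<open>A set of upper density \<open>\<delta> > 0\<close> has at most \<open>2/\<delta>\<close> pairwise disjoint integer
  translates: they all fit, up to an initial segment, into an interval of length about \<open>2N\<close>.\<close>
lemma disjoint_translates_card_le:
  fixes S :: "nat set" and F :: "int set"
  assumes \<delta>: "\<delta> > 0" and dens: "upper_density_ge S \<delta>"
    and fin: "finite F" and disj: "disjoint_family_on (\<lambda>f. (\<lambda>s. f + int s) ` S) F"
  shows "real (card F) \<le> 2 / \<delta>"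
proof -
  define R where "R = nat (Max (insert 0 (abs ` F)))"
  have R: "\<bar>f\<bar> \<le> int R" if "f \<in> F" for f
    using fin that by (auto simp: R_def intro: Max_ge)
  obtain N where N: "N \<ge> 2 * R + 1" and cN: "\<delta> * real N \<le> real (card (S \<inter> {..N}))"
    using dens unfolding upper_density_ge_def by blast
  define A where "A f = (\<lambda>s. f + int s) ` (S \<inter> {..N})" for f
  have card_A: "card (A f) = card (S \<inter> {..N})" for f
    unfolding A_def by (rule card_image) (auto simp: inj_on_def)
  have "card F * card (S \<inter> {..N}) = (\<Sum>f\<in>F. card (A f))" by (simp add: card_A)
  also have "\<dots> = card (\<Union>f\<in>F. A f)"
    using fin disj by (intro card_UN_disjoint[symmetric]) (auto simp: A_def disjoint_family_on_def)
  also have "\<dots> \<le> card {-int R..int R + int N}"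
    using R by (intro card_mono) (force simp: A_def)+
  also have "\<dots> \<le> 2 * N" using N by simp
  finally have "real (card F) * real (card (S \<inter> {..N})) \<le> 2 * real N"
    by (metis of_nat_le_iff of_nat_mult of_nat_numeral)
  moreover have "real (card F) * (\<delta> * real N) \<le> real (card F) * real (card (S \<inter> {..N}))"
    using cN by (simp add: mult_left_mono)
  ultimately have "(real (card F) * \<delta>) * real N \<le> 2 * real N" by (simp add: mult.assoc)
  moreover have "real N > 0" using N by simp
  ultimately show ?thesis using \<delta> by (simp add: field_simps)
qed

text \<open>The translates by a maximal family with
  disjoint translates of \<open>S\<close> meet every other translate; shifting the family to start at 0
  makes its elements natural.\<close>
lemma difference_set_cover:
  fixes S :: "nat set"
  assumes \<delta>: "\<delta> > 0" and dens: "upper_density_ge S \<delta>"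
  obtains G :: "nat set" where "finite G" and "real (card G) \<le> 2 / \<delta>"
    and "\<And>m::int. \<exists>g\<in>G. \<exists>s1\<in>S. \<exists>s2\<in>S. m + int s1 = int g + int s2"
proof -
  define admissible where
    "admissible k \<longleftrightarrow> (\<exists>F. finite F \<and> disjoint_family_on (\<lambda>f. (\<lambda>s. f + int s) ` S) F \<and> card F = k)"
    for k
  have adm1: "admissible 1"
    unfolding admissible_def by (rule exI[of _ "{0}"]) (simp add: disjoint_family_on_def)
  moreover have adm_bounded: "\<forall>k. admissible k \<longrightarrow> k \<le> nat \<lfloor>2 / \<delta>\<rfloor>"
  proof (intro allI impI)
    fix k assume "admissible k"
    then obtain F where "finite F" "disjoint_family_on (\<lambda>f. (\<lambda>s. f + int s) ` S) F" "card F = k"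
      unfolding admissible_def by blast
    then have "real k \<le> 2 / \<delta>" using disjoint_translates_card_le[OF \<delta> dens] by blast
    then show "k \<le> nat \<lfloor>2 / \<delta>\<rfloor>" by linarith
  qed
  ultimately obtain k where "admissible k" and k_max: "\<And>k'. admissible k' \<Longrightarrow> k' \<le> k"
    using Nat.ex_has_greatest_nat[OF adm1 adm_bounded] by blast
  then obtain F where fin: "finite F" and disj: "disjoint_family_on (\<lambda>f. (\<lambda>s. f + int s) ` S) F"
    and card_F: "card F = k"
    unfolding admissible_def by blast
  have "S \<noteq> {}"
  proof -
    obtain N where "N \<ge> 1" and "\<delta> * real N \<le> real (card (S \<inter> {..N}))"
      using dens unfolding upper_density_ge_def by blast
    moreover have "\<delta> * real N > 0" using \<delta> \<open>N \<ge> 1\<close> by simp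
    ultimately have "card (S \<inter> {..N}) > 0" by linarith
    then show ?thesis by auto
  qed
  have meets: "\<exists>f\<in>F. \<exists>s1\<in>S. \<exists>s2\<in>S. m + int s1 = f + int s2" for m
  proof (cases "m \<in> F")
    case True
    then show ?thesis using \<open>S \<noteq> {}\<close> by blast
  next
    case False
    show ?thesis
    proof (rule ccontr)
      assume no_meet: "\<not> ?thesis"
      have "(\<lambda>s. m + int s) ` S \<inter> (\<Union>f\<in>F. (\<lambda>s. f + int s) ` S) = {}"
        using no_meet by auto
      then have "disjoint_family_on (\<lambda>f. (\<lambda>s. f + int s) ` S) (insert m F)"
        using disj False by (simp add: disjoint_family_on_insert)
      then have "admissible (Suc k)"
        unfolding admissible_def using False fin card_F by (intro exI[of _ "insert m F"]) simp
      then show False using k_max by fastforce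
    qed
  qed
  define a where "a = Min F"
  have a_le: "a \<le> f" if "f \<in> F" for f unfolding a_def using fin that by simp
  define G where "G = (\<lambda>f. nat (f - a)) ` F"
  have "finite G" unfolding G_def using fin by simp
  moreover have "real (card G) \<le> 2 / \<delta>"
    using card_image_le[OF fin, of "\<lambda>f. nat (f - a)"] disjoint_translates_card_le[OF \<delta> dens fin disj]
    unfolding G_def by linarith
  moreover have "\<exists>g\<in>G. \<exists>s1\<in>S. \<exists>s2\<in>S. m + int s1 = int g + int s2" for m
  proof -
    obtain f s1 s2 where "f \<in> F" "s1 \<in> S" "s2 \<in> S" "m + a + int s1 = f + int s2"
      using meets[of "m + a"] by blast
    moreover from \<open>f \<in> F\<close> have "int (nat (f - a)) = f - a" using a_le by simp
    ultimately have "m + int s1 = int (nat (f - a)) + int s2" by simp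
    then show ?thesis unfolding G_def using \<open>f \<in> F\<close> \<open>s1 \<in> S\<close> \<open>s2 \<in> S\<close> by blast
  qed
  ultimately show ?thesis using that by blast
qed

lemma upper_density_ge_diff_finite:
  fixes S D :: "nat set"
  assumes \<delta>: "\<delta> > 0" and dens: "upper_density_ge S \<delta>" and fin: "finite D"
  shows "upper_density_ge (S - D) (\<delta> / 2)"
  unfolding upper_density_ge_def
proof
  fix N0
  obtain N where N: "N \<ge> max N0 (nat \<lceil>2 * real (card D) / \<delta>\<rceil>)"
    and dN: "\<delta> * real N \<le> real (card (S \<inter> {..N}))"
    using dens unfolding upper_density_ge_def by blast
  have "card (S \<inter> {..N}) \<le> card ((S - D) \<inter> {..N} \<union> D)"
    using fin by (intro card_mono) auto
  also have "\<dots> \<le> card ((S - D) \<inter> {..N}) + card D" by (rule card_Un_le)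
  finally have "real (card (S \<inter> {..N})) \<le> real (card ((S - D) \<inter> {..N})) + real (card D)"
    by linarith
  moreover have "2 * real (card D) \<le> \<delta> * real N"
  proof -
    have "2 * real (card D) / \<delta> \<le> real N" using N by linarith
    then show ?thesis using \<delta> by (simp add: field_simps)
  qed
  ultimately show "\<exists>N\<ge>N0. \<delta> / 2 * real N \<le> real (card ((S - D) \<inter> {..N}))"
    using N dN by (intro exI[of _ N]) auto
qed

lemma positive_upper_density_of_not_density_zero:
  fixes n :: "nat \<Rightarrow> nat"
  assumes inj: "inj n" and not_zero: "\<not> (\<lambda>N. real (card {k. n k \<le> N}) / real N) \<longlonglongrightarrow> 0"
  obtains \<delta> where "\<delta> > 0" and "upper_density_ge (range n) \<delta>"
proof -
  have card_eq: "card {k. n k \<le> N} = card (range n \<inter> {..N})" for N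
  proof -
    have "range n \<inter> {..N} = n ` {k. n k \<le> N}" by auto
    then show ?thesis using inj by (simp add: card_image inj_on_subset)
  qed
  obtain r :: real where r: "r > 0"
    and freq: "\<And>N0. \<exists>N\<ge>N0. \<not> dist (real (card {k. n k \<le> N}) / real N) 0 < r"
    using not_zero unfolding LIMSEQ_def by blast
  have "\<exists>N\<ge>N0. r * real N \<le> real (card (range n \<inter> {..N}))" for N0
  proof -
    obtain N where N: "N \<ge> Suc N0" and "\<not> dist (real (card {k. n k \<le> N}) / real N) 0 < r"
      using freq by blast
    then have "r \<le> real (card {k. n k \<le> N}) / real N" by simp
    moreover have "real N > 0" using N by simp
    ultimately have "r * real N \<le> real (card (range n \<inter> {..N}))"
      by (simp add: field_simps card_eq)
    then show ?thesis using N by (intro exI[of _ N]) simp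
  qed
  then show thesis using that r unfolding upper_density_ge_def by blast
qed

locale invertible_mps = prob_space M for M :: "'a measure" +
  fixes T :: "'a \<Rightarrow> 'a"
  assumes T_bij: "bij_betw T (space M) (space M)"
    and T_preserving: "measure_preserving M T"
    and T_inv_measurable: "inv_into (space M) T \<in> M \<rightarrow>\<^sub>M M"
begin

lemma T_measurable: "T \<in> M \<rightarrow>\<^sub>M M"
  using T_preserving by (simp add: measure_preserving_def)

lemma funpow_bij: "bij_betw (T ^^ m) (space M) (space M)"
  by (rule bij_betw_funpow[OF T_bij])

lemma funpow_in_space: "x \<in> space M \<Longrightarrow> (T ^^ m) x \<in> space M"
  using funpow_bij bij_betwE by blast

text \<open>Since the inverse is measurable, images of events are events.\<close>
lemma image_in_sets:
  assumes A: "A \<in> sets M" shows "T ` A \<in> sets M"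
proof -
  have "T ` A = inv_into (space M) T -` A \<inter> space M"
    using sets.sets_into_space[OF A] T_bij
    by (auto simp: bij_betw_inv_into_left bij_betw_inv_into_right bij_betwE image_iff
        intro: bij_betw_inv_into_right[symmetric])
  then show ?thesis using measurable_sets[OF T_inv_measurable A] by simp
qed

lemma funpow_image_in_sets:
  assumes "A \<in> sets M" shows "(T ^^ m) ` A \<in> sets M"
proof (induction m)
  case (Suc m)
  have "(T ^^ Suc m) ` A = T ` ((T ^^ m) ` A)" by (simp add: image_image)
  then show ?case using image_in_sets[OF Suc] by (simp only:)
qed (simp add: assms)

lemma funpow_distr: "distr M M (T ^^ m) = M"
proof (induction m)
  case (Suc m)
  have "distr M M (T ^^ Suc m) = distr (distr M M (T ^^ m)) M T"
    by (simp add: distr_distr[OF T_measurable measurable_compose_n[OF T_measurable]])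
  also have "\<dots> = M" using Suc T_preserving by (simp add: measure_preserving_def)
  finally show ?case .
qed simp

lemma measure_funpow_vimage:
  assumes "A \<in> sets M" shows "measure M ((T ^^ m) -` A \<inter> space M) = measure M A"
  using measure_distr[OF measurable_compose_n[OF T_measurable] assms, of m] by (simp add: funpow_distr)

text \<open>The orbit saturation of \<open>A\<close>: the points whose two-sided orbit meets \<open>A\<close>, expressed with
  forward iterates only (\<open>T^a y = T^b z\<close> for some \<open>z \<in> A\<close>).\<close>
definition orbit_hull :: "'a set \<Rightarrow> 'a set" where
  "orbit_hull A = {y \<in> space M. \<exists>a b. (T ^^ a) y \<in> (T ^^ b) ` A}"

lemma orbit_hull_in_sets:
  assumes "A \<in> sets M" shows "orbit_hull A \<in> sets M"
proof -
  have "orbit_hull A = (\<Union>a. \<Union>b. (T ^^ a) -` ((T ^^ b) ` A) \<inter> space M)"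
    by (auto simp: orbit_hull_def)
  moreover have "(T ^^ a) -` ((T ^^ b) ` A) \<inter> space M \<in> sets M" for a b
    by (rule measurable_sets[OF measurable_compose_n[OF T_measurable] funpow_image_in_sets[OF assms]])
  ultimately show ?thesis by (auto simp del: UN_simps intro!: sets.countable_UN)
qed

lemma orbit_hull_invariant: "T -` orbit_hull A \<inter> space M = orbit_hull A"
proof (intro set_eqI iffI)
  fix y assume "y \<in> T -` orbit_hull A \<inter> space M"
  then obtain a b where "y \<in> space M" "(T ^^ a) (T y) \<in> (T ^^ b) ` A"
    by (auto simp: orbit_hull_def)
  then have "y \<in> space M" "(T ^^ Suc a) y \<in> (T ^^ b) ` A" by (simp_all add: funpow_swap1)
  then show "y \<in> orbit_hull A" unfolding orbit_hull_def by blast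
next
  fix y assume "y \<in> orbit_hull A"
  then obtain a b z where y: "y \<in> space M" and "z \<in> A" and orbit: "(T ^^ a) y = (T ^^ b) z"
    by (auto simp: orbit_hull_def)
  have "(T ^^ a) (T y) = (T ^^ Suc b) z" using orbit by (simp add: funpow_swap1[symmetric])
  then have "(T ^^ a) (T y) \<in> (T ^^ Suc b) ` A" using \<open>z \<in> A\<close> by (rule image_eqI)
  moreover have "T y \<in> space M" using y T_bij bij_betwE by blast
  ultimately have "T y \<in> orbit_hull A" unfolding orbit_hull_def by blast
  then show "y \<in> T -` orbit_hull A \<inter> space M" using y by simp
qed

lemma orbit_hull_superset: "A \<subseteq> space M \<Longrightarrow> A \<subseteq> orbit_hull A"
  unfolding orbit_hull_def by (force intro: exI[of _ 0])

lemma ergodic_orbit_hull_full: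
  assumes "ergodic M T" and "A \<in> sets M" and "measure M A > 0"
  shows "measure M (orbit_hull A) = 1"
proof -
  have "measure M A \<le> measure M (orbit_hull A)"
    using assms(2) sets.sets_into_space
    by (intro finite_measure_mono orbit_hull_superset orbit_hull_in_sets) auto
  moreover have "measure M (orbit_hull A) = 0 \<or> measure M (orbit_hull A) = 1"
    using assms(1) orbit_hull_in_sets[OF assms(2)] orbit_hull_invariant
    unfolding ergodic_def by blast
  ultimately show ?thesis using assms(3) by linarith
qed

text \<open>Injectivity of the iterates lets us cancel the common power of \<open>T\<close>.\<close>
lemma orbit_hull_return:
  assumes y: "y \<in> orbit_hull A" and A: "A \<subseteq> space M"
    and cover: "\<And>m::int. \<exists>g\<in>G. \<exists>s1\<in>S. \<exists>s2\<in>S. m + int s1 = int g + int s2"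
  shows "\<exists>g\<in>G. \<exists>s1\<in>S. \<exists>s2\<in>S. \<exists>z\<in>A. (T ^^ s2) ((T ^^ g) y) = (T ^^ s1) z"
proof -
  obtain a b z where y_sp: "y \<in> space M" and "z \<in> A" and orbit: "(T ^^ a) y = (T ^^ b) z"
    using y by (auto simp: orbit_hull_def)
  obtain g s1 s2 where "g \<in> G" "s1 \<in> S" "s2 \<in> S" and "int a - int b + int s1 = int g + int s2"
    using cover by blast
  then have times: "b + (s2 + g) = s1 + a" by linarith
  have "(T ^^ i) \<circ> (T ^^ j) = (T ^^ j) \<circ> (T ^^ i)" for i j
    by (simp only: funpow_add[symmetric] add.commute)
  then have commute: "(T ^^ i) ((T ^^ j) x) = (T ^^ j) ((T ^^ i) x)" for i j x
    by (metis comp_apply)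
  have "(T ^^ b) ((T ^^ s2) ((T ^^ g) y)) = (T ^^ (s1 + a)) y"
    by (simp flip: times add: funpow_add)
  also have "\<dots> = (T ^^ b) ((T ^^ s1) z)" by (simp add: funpow_add orbit commute)
  finally have "(T ^^ s2) ((T ^^ g) y) = (T ^^ s1) z"
    using bij_betw_imp_inj_on[OF funpow_bij] y_sp A \<open>z \<in> A\<close>
    by (auto simp: inj_on_def funpow_in_space)
  then show ?thesis using \<open>g \<in> G\<close> \<open>s1 \<in> S\<close> \<open>s2 \<in> S\<close> \<open>z \<in> A\<close> by blast
qed

lemma translates_cover_measure:
  assumes "measure M W = 1" and cover: "W \<subseteq> (\<Union>g\<in>G. (T ^^ g) -` C \<inter> space M)"
    and "finite G" and C: "C \<in> sets M"
  shows "1 \<le> real (card G) * measure M C"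
proof -
  have sets: "(T ^^ g) -` C \<inter> space M \<in> sets M" for g
    by (rule measurable_sets[OF measurable_compose_n[OF T_measurable] C])
  have "1 \<le> measure M (\<Union>g\<in>G. (T ^^ g) -` C \<inter> space M)"
    unfolding assms(1)[symmetric] using cover sets \<open>finite G\<close> by (intro finite_measure_mono sets.finite_UN) auto
  also have "\<dots> \<le> (\<Sum>g\<in>G. measure M ((T ^^ g) -` C \<inter> space M))"
    using \<open>finite G\<close> sets by (rule measure_UNION_le)
  also have "\<dots> = real (card G) * measure M C" by (simp add: measure_funpow_vimage C)
  finally show ?thesis .
qed

end

lemma nonatomic_singleton_null:
  assumes "nonatomic M" and "{x} \<in> sets M"
  shows "measure M {x} = 0"
proof (rule ccontr)
  assume "measure M {x} \<noteq> 0"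
  then have "measure M {x} > 0" using measure_nonneg[of M "{x}"] by linarith
  moreover have "\<forall>B\<in>sets M. B \<subseteq> {x} \<longrightarrow> measure M B = 0 \<or> measure M B = measure M {x}"
    by (metis measure_empty subset_singletonD)
  ultimately show False using assms unfolding nonatomic_def by blast
qed

lemma uniformly_rigid_eventually_close:
  fixes X :: "'a::metric_space set"
  assumes rigid: "uniformly_rigid X T n" and "bounded X" and into: "T ` X \<subseteq> X" and "\<epsilon> > 0"
  obtains K where "\<And>k x. k \<ge> K \<Longrightarrow> x \<in> X \<Longrightarrow> dist ((T ^^ n k) x) x < \<epsilon>"
proof -
  obtain b where b: "\<And>x y. x \<in> X \<Longrightarrow> y \<in> X \<Longrightarrow> dist x y \<le> b"
    using \<open>bounded X\<close> by (meson bounded_two_points)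
  have iterate_in: "(T ^^ m) x \<in> X" if "x \<in> X" for m x
    using that into by (induction m) auto
  obtain K where K: "\<And>k. k \<ge> K \<Longrightarrow> \<bar>SUP x\<in>X. dist ((T ^^ n k) x) x\<bar> < \<epsilon>"
    using LIMSEQ_D[OF rigid[unfolded uniformly_rigid_def] \<open>\<epsilon> > 0\<close>] by auto
  have "dist ((T ^^ n k) x) x < \<epsilon>" if "k \<ge> K" "x \<in> X" for k x
  proof -
    have "bdd_above ((\<lambda>x. dist ((T ^^ n k) x) x) ` X)"
      using b iterate_in by (auto intro!: bdd_aboveI2)
    then have "dist ((T ^^ n k) x) x \<le> (SUP x\<in>X. dist ((T ^^ n k) x) x)"
      using \<open>x \<in> X\<close> by (rule cSUP_upper2) simp
    then show ?thesis using K[OF \<open>k \<ge> K\<close>] by linarith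
  qed
  then show thesis using that by blast
qed

locale metric_invertible_mps = invertible_mps M T for M :: "'a::metric_space measure" and T +
  assumes sets_borel: "sets M = sets (restrict_space borel (space M))"
begin

lemma borel_Int_space_in_sets:
  assumes "B \<in> sets borel" shows "B \<inter> space M \<in> sets M"
proof -
  have "B \<inter> space M \<in> sets (restrict_space borel (space M))"
    using assms by (auto simp: sets_restrict_space)
  then show ?thesis by (subst sets_borel)
qed

lemma ball_in_sets: "ball x e \<inter> space M \<in> sets M"
  by (rule borel_Int_space_in_sets) simp

lemma singleton_in_sets: "x \<in> space M \<Longrightarrow> {x} \<in> sets M"
  using borel_Int_space_in_sets[of "{x}"] by simp

text \<open>A probability measure on a compact space has a point of its support: every ball around
  it has positive measure (otherwise finitely many null balls would cover the space).\<close>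
lemma support_point_exists:
  assumes "compact (space M)"
  obtains x0 where "x0 \<in> space M" and "\<And>e. e > 0 \<Longrightarrow> measure M (ball x0 e \<inter> space M) > 0"
proof -
  have "\<exists>x0\<in>space M. \<forall>e>0. measure M (ball x0 e \<inter> space M) > 0"
  proof (rule ccontr)
    assume none: "\<not> ?thesis"
    have "\<exists>e>0. measure M (ball x e \<inter> space M) = 0" if "x \<in> space M" for x
    proof -
      from none that obtain e where "e > 0" and "\<not> measure M (ball x e \<inter> space M) > 0" by blast
      then show ?thesis using measure_nonneg[of M "ball x e \<inter> space M"] by (intro exI[of _ e]) simp
    qed
    then obtain e where e_pos: "\<And>x. x \<in> space M \<Longrightarrow> e x > 0"
      and e_null: "\<And>x. x \<in> space M \<Longrightarrow> measure M (ball x (e x) \<inter> space M) = 0"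
      by metis
    have "space M \<subseteq> (\<Union>x\<in>space M. ball x (e x))"
      using e_pos by (meson UN_I centre_in_ball subsetI)
    then obtain D where D: "D \<subseteq> space M" "finite D" "space M \<subseteq> (\<Union>x\<in>D. ball x (e x))"
      using compactE_image[OF assms, of "space M" "\<lambda>x. ball x (e x)"] by auto
    then have "space M = (\<Union>x\<in>D. ball x (e x) \<inter> space M)" by blast
    then have "measure M (space M) \<le> (\<Sum>x\<in>D. measure M (ball x (e x) \<inter> space M))"
      using measure_UNION_le[OF D(2), of "\<lambda>x. ball x (e x) \<inter> space M" M] ball_in_sets by simp
    also have "\<dots> = 0" using e_null D(1) by (intro sum.neutral) blast
    finally show False using prob_space by simp
  qed
  then show thesis using that by blast
qed

text \<open>Around a null point the measure of balls tends to zero (continuity from above).\<close>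
lemma small_ball_exists:
  assumes "x0 \<in> space M" and "measure M {x0} = 0" and "\<eta> > 0"
  obtains r where "r > 0" and "measure M (ball x0 r \<inter> space M) < \<eta>"
proof -
  define A where "A k = ball x0 (1 / real (Suc k)) \<inter> space M" for k
  have "decseq A"
    unfolding A_def decseq_def
  proof (intro allI impI)
    fix i j :: nat assume "i \<le> j"
    then have "1 / real (Suc j) \<le> 1 / real (Suc i)" by (simp add: frac_le)
    then show "ball x0 (1 / real (Suc j)) \<inter> space M \<subseteq> ball x0 (1 / real (Suc i)) \<inter> space M"
      by auto
  qed
  moreover have "range A \<subseteq> sets M" unfolding A_def using ball_in_sets by blast
  ultimately have lim: "(\<lambda>k. measure M (A k)) \<longlonglongrightarrow> measure M (\<Inter>k. A k)"
    by (intro finite_Lim_measure_decseq)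
  have "(\<Inter>k. A k) = {x0}"
  proof (intro equalityI subsetI)
    fix y assume y: "y \<in> (\<Inter>k. A k)"
    have close: "dist x0 y < 1 / real (Suc k)" for k
    proof -
      have "y \<in> A k" using y by blast
      then show ?thesis by (simp add: A_def)
    qed
    have "dist x0 y = 0"
    proof (rule ccontr)
      assume "dist x0 y \<noteq> 0"
      then have "dist x0 y > 0" by simp
      then obtain k where "1 / real (Suc k) < dist x0 y" by (rule nat_approx_posE)
      then show False using close[of k] by linarith
    qed
    then show "y \<in> {x0}" by simp
  next
    fix y assume "y \<in> {x0}"
    then show "y \<in> (\<Inter>k. A k)" using assms(1) by (simp add: A_def)
  qed
  then have "(\<lambda>k. measure M (A k)) \<longlonglongrightarrow> 0" using lim assms(2) by simp
  from LIMSEQ_D[OF this \<open>\<eta> > 0\<close>] obtain k where "\<forall>j\<ge>k. norm (measure M (A j) - 0) < \<eta>" ..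
  then have "measure M (A k) < \<eta>" by simp
  then show thesis using that[of "1 / real (Suc k)"] by (simp add: A_def)
qed

lemma rigidity_times_ball_bound:
  assumes erg: "ergodic M T" and \<delta>: "\<delta> > 0" and dens: "upper_density_ge S \<delta>"
    and rigid: "\<And>s x. s \<in> S \<Longrightarrow> x \<in> space M \<Longrightarrow> dist ((T ^^ s) x) x < \<epsilon>"
    and pos: "measure M (ball x0 \<epsilon> \<inter> space M) > 0"
  shows "1 \<le> 2 / \<delta> * measure M (ball x0 (3 * \<epsilon>) \<inter> space M)"
proof -
  obtain G where fin: "finite G" and card_G: "real (card G) \<le> 2 / \<delta>"
    and cover: "\<And>m::int. \<exists>g\<in>G. \<exists>s1\<in>S. \<exists>s2\<in>S. m + int s1 = int g + int s2"
    using difference_set_cover[OF \<delta> dens] by blast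
  define A where "A = ball x0 \<epsilon> \<inter> space M"
  define C where "C = ball x0 (3 * \<epsilon>) \<inter> space M"
  have "orbit_hull A \<subseteq> (\<Union>g\<in>G. (T ^^ g) -` C \<inter> space M)"
  proof
    fix y assume y: "y \<in> orbit_hull A"
    then have y_sp: "y \<in> space M" by (simp add: orbit_hull_def)
    have "A \<subseteq> space M" by (simp add: A_def)
    then obtain g s1 s2 z where "g \<in> G" "s1 \<in> S" "s2 \<in> S" "z \<in> A"
      and meet: "(T ^^ s2) ((T ^^ g) y) = (T ^^ s1) z"
      using orbit_hull_return[OF y _ cover] by blast
    define w where "w = (T ^^ g) y"
    have w_sp: "w \<in> space M" using y_sp by (simp add: w_def funpow_in_space)
    have z_sp: "z \<in> space M" and z_near: "dist x0 z < \<epsilon>" using \<open>z \<in> A\<close> by (auto simp: A_def)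
    have "dist x0 w \<le> dist x0 z + dist z ((T ^^ s1) z) + dist ((T ^^ s2) w) w"
      using dist_triangle[of x0 w z] dist_triangle[of z w "(T ^^ s1) z"] meet
      by (simp add: w_def)
    also have "\<dots> < 3 * \<epsilon>"
      using z_near rigid[OF \<open>s1 \<in> S\<close> z_sp] rigid[OF \<open>s2 \<in> S\<close> w_sp] by (simp add: dist_commute)
    finally have "w \<in> C" using w_sp by (simp add: C_def)
    then show "y \<in> (\<Union>g\<in>G. (T ^^ g) -` C \<inter> space M)"
      using \<open>g \<in> G\<close> y_sp by (auto simp: w_def)
  qed
  moreover have "measure M (orbit_hull A) = 1"
    using ergodic_orbit_hull_full[OF erg ball_in_sets pos] by (simp add: A_def)
  ultimately have "1 \<le> real (card G) * measure M C"
    using translates_cover_measure[OF _ _ fin] ball_in_sets by (simp add: C_def)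
  also have "\<dots> \<le> 2 / \<delta> * measure M C"
    using card_G by (intro mult_right_mono) simp_all
  finally show ?thesis by (simp add: C_def)
qed

end

theorem proposition4p1:
  fixes X :: "'a::metric_space set" and M :: "'a measure"
    and T :: "'a \<Rightarrow> 'a" and n :: "nat \<Rightarrow> nat"
  assumes "compact X"
    and "space M = X" and "sets M = sets (restrict_space borel X)"
    and "prob_space M"
    and "nonatomic M"
    and "bij_betw T X X"
    and "measure_preserving M T"
    and "measure_preserving M (inv_into X T)"
    and "ergodic M T"
    and "strict_mono n"
    and "uniformly_rigid X T n"
  shows "(\<lambda>N. real (card {k. n k \<le> N}) / real N) \<longlonglongrightarrow> 0"
proof (rule ccontr)
  assume not_zero: "\<not> ?thesis"
  interpret metric_invertible_mps M T
    using assms(2-4,6-8)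
    by (intro metric_invertible_mps.intro invertible_mps.intro invertible_mps_axioms.intro
        metric_invertible_mps_axioms.intro) (simp_all add: measure_preserving_def)
  obtain \<delta> where \<delta>: "\<delta> > 0" and dens: "upper_density_ge (range n) \<delta>"
    using positive_upper_density_of_not_density_zero[OF strict_mono_imp_inj_on[OF assms(10)] not_zero] .
  obtain x0 where x0: "x0 \<in> space M" and supp: "\<And>e. e > 0 \<Longrightarrow> measure M (ball x0 e \<inter> space M) > 0"
    using support_point_exists assms(1,2) by blast
  obtain r where "r > 0" and small: "measure M (ball x0 r \<inter> space M) < \<delta> / 4"
    using small_ball_exists[OF x0 nonatomic_singleton_null[OF assms(5) singleton_in_sets[OF x0]]] \<delta>
    by (metis zero_less_divide_iff zero_less_numeral)
  obtain K where close: "\<And>k x. k \<ge> K \<Longrightarrow> x \<in> X \<Longrightarrow> dist ((T ^^ n k) x) x < r / 3"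
    using uniformly_rigid_eventually_close[OF assms(11) compact_imp_bounded[OF assms(1)]] assms(6) \<open>r > 0\<close>
    by (metis bij_betw_imp_surj_on order_refl zero_less_divide_iff zero_less_numeral)
  define S where "S = range n - n ` {..<K}"
  have dens_S: "upper_density_ge S (\<delta> / 2)" unfolding S_def by (rule upper_density_ge_diff_finite[OF \<delta> dens]) simp
  have rigid_S: "dist ((T ^^ s) x) x < r / 3" if "s \<in> S" and "x \<in> space M" for s x
  proof -
    obtain k where "s = n k" and "\<not> k < K" using \<open>s \<in> S\<close> unfolding S_def by blast
    then show ?thesis using close \<open>x \<in> space M\<close> assms(2) by simp
  qed
  have "1 \<le> 2 / (\<delta> / 2) * measure M (ball x0 (3 * (r / 3)) \<inter> space M)"
    using \<delta> \<open>r > 0\<close> by (intro rigidity_times_ball_bound[OF assms(9) _ dens_S rigid_S supp]) simp_all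
  also have "\<dots> < 2 / (\<delta> / 2) * (\<delta> / 4)" using small \<delta> by simp
  also have "\<dots> = 1" using \<delta> by simp
  finally show False by simp
qed

end
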